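(* Let $p \geq 2$ be an integer and let $U_p=\bigcup_{n\in 2\mathbb Z_+}\mathbb Z_p^n$. Let $\boldsymbol a,\boldsymbol b\in U_p$ be equivalent (in the sense defined in the context). Then $\tau_p(\boldsymbol a)=\tau_p(\boldsymbol b)$.
   Context: $\mathbb Z_+$ denotes the positive integers and $\mathbb Z_p=\mathbb Z/p\mathbb Z$. Two elements of $U_p$ are called equivalent if they are related by a finite sequence of the following transformations of $(a_1,\ldots,a_n)\in\mathbb Z_p^n$ ($n$ even): (Op1) $(a_1,\ldots,a_n)\to(a_2,\ldots,a_n,a_1)$; (Op2) $(a_1,\ldots,a_n)\to(a, a_2+(-1)^2(a_1-a),\ldots,a_i+(-1)^i(a_1-a),\ldots,a_n+(-1)^n(a_1-a))$ for any $a\in\mathbb Z_p$; (Op3) $(a_1,\ldots,a_n)\to(a, a_1-a_2+a,\ldots,a_1-a_i+a,\ldots,a_1-a_n+a)$ for any $a\in\mathbb Z_p$; (Op4) $(a_1,\ldots,a_n)\to(a_1,-a_1+a_2+a_3,a_3,\ldots,a_n)$ when $n>3$. For $\boldsymbol a=(a_1,\ldots,a_n)\in U_p$, $\tau_p(\boldsymbol a)$ is the maximum of all $k\in\{1,\ldots,p\}$ such that $k\mid p$ and $a_1+a_2\equiv a_2+a_3\equiv\cdots\equiv a_{n-1}+a_n\equiv a_n+a_1 \pmod k$ (congruence mod $k$ is well defined on $\mathbb Z_p$ since $k\mid p$). *)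

theory Defs
  imports Main
begin

text \<open>Elements of Z_p^n are represented as lists of integers with entries in {0..<p};
  all operations reduce modulo p. Positions are 1-based in the paper, 0-based here.\<close>

definition U :: "int \<Rightarrow> int list set" where
  "U p = {xs. xs \<noteq> [] \<and> even (length xs) \<and> (\<forall>x\<in>set xs. 0 \<le> x \<and> x < p)}"

definition op1 :: "int list \<Rightarrow> int list" where
  "op1 xs = tl xs @ [hd xs]"

definition op2 :: "int \<Rightarrow> int \<Rightarrow> int list \<Rightarrow> int list" where
  "op2 p a xs = map (\<lambda>i. if i = 0 then a mod p
       else (xs ! i + (-1) ^ (i + 1) * (xs ! 0 - a)) mod p) [0..<length xs]"

definition op3 :: "int \<Rightarrow> int \<Rightarrow> int list \<Rightarrow> int list" where
  "op3 p a xs = map (\<lambda>i. if i = 0 then a mod p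
       else (xs ! 0 - xs ! i + a) mod p) [0..<length xs]"

definition op4 :: "int \<Rightarrow> int list \<Rightarrow> int list" where
  "op4 p xs = xs[1 := (- xs ! 0 + xs ! 1 + xs ! 2) mod p]"

inductive step :: "int \<Rightarrow> int list \<Rightarrow> int list \<Rightarrow> bool" for p where
  s1: "step p xs (op1 xs)"
| s2: "step p xs (op2 p a xs)"
| s3: "step p xs (op3 p a xs)"
| s4: "length xs > 3 \<Longrightarrow> step p xs (op4 p xs)"

definition equiv_Up :: "int \<Rightarrow> int list \<Rightarrow> int list \<Rightarrow> bool" where
  "equiv_Up p xs ys = (\<lambda>u v. step p u v \<or> step p v u)\<^sup>*\<^sup>* xs ys"

definition sums_cong :: "int \<Rightarrow> int list \<Rightarrow> bool" where
  "sums_cong k xs = (\<forall>i < length xs. \<forall>j < length xs.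
     (xs ! i + xs ! ((i + 1) mod length xs)) mod k = (xs ! j + xs ! ((j + 1) mod length xs)) mod k)"

definition tau :: "int \<Rightarrow> int list \<Rightarrow> int" where
  "tau p xs = Max {k. 1 \<le> k \<and> k \<le> p \<and> k dvd p \<and> sums_cong k xs}"

end

theory Submission
  imports Defs "HOL-Number_Theory.Cong"
begin

text \<open>Fix a divisor k of p; the reductions modulo p are invisible modulo k. Each
  transformation preserves the length and acts on the cyclic adjacent sums modulo k in a
  way that can neither destroy nor create their congruence: Op1 rotates them, Op2 leaves
  them unchanged (the alternating signs cancel in adjacent positions because n is even),
  Op3 applies the involution s \<mapsto> 2(a_1 + a) - s, and Op4 replaces the first two sums
  s_1, s_2 by s_2, 2 s_2 - s_1 and keeps the others. Hence the set of admissible k in the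
  definition of \<tau>_p is an invariant.\<close>

definition adj_sum :: "int list \<Rightarrow> nat \<Rightarrow> int" where
  "adj_sum xs i = xs ! i + xs ! ((i + 1) mod length xs)"

lemma sums_cong_iff_adj_sum:
  "sums_cong k xs \<longleftrightarrow> (\<forall>i<length xs. \<forall>j<length xs. [adj_sum xs i = adj_sum xs j] (mod k))"
  by (simp add: sums_cong_def adj_sum_def cong_def)

lemma sums_cong_iff_common_residue:
  assumes "xs \<noteq> []"
  shows "sums_cong k xs \<longleftrightarrow> (\<exists>c. \<forall>i<length xs. [adj_sum xs i = c] (mod k))"
  using assms unfolding sums_cong_iff_adj_sum
  by (meson cong_sym cong_trans length_greater_0_conv)

lemma cong_affine_iff:
  fixes s :: int
  assumes "s * s = 1"
  shows "[c + s * x = c + s * y] (mod k) \<longleftrightarrow> [x = y] (mod k)"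
proof -
  have "[s * x = s * y] (mod k) \<Longrightarrow> [x = y] (mod k)"
    using cong_scalar_left[of "s * x" "s * y" k s] assms by (simp add: mult.assoc[symmetric])
  then show ?thesis
    by (auto simp: cong_add_lcancel intro: cong_scalar_left)
qed

lemma sums_cong_transfer:
  fixes u v :: "int list" and s :: int
  assumes "length v = length u" and "f ` {..<length u} = {..<length u}" and "s * s = 1"
    and "\<And>i. i < length u \<Longrightarrow> [adj_sum v i = c + s * adj_sum u (f i)] (mod k)"
  shows "sums_cong k v \<longleftrightarrow> sums_cong k u"
proof -
  have "[adj_sum v i = adj_sum v j] (mod k) \<longleftrightarrow> [adj_sum u (f i) = adj_sum u (f j)] (mod k)"
    if "i < length u" "j < length u" for i j
    using assms(4)[OF that(1)] assms(4)[OF that(2)] cong_affine_iff[OF assms(3)]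
    by (meson cong_sym cong_trans)
  then have "sums_cong k v \<longleftrightarrow>
      (\<forall>i\<in>f ` {..<length u}. \<forall>j\<in>f ` {..<length u}. [adj_sum u i = adj_sum u j] (mod k))"
    using assms(1) by (auto simp: sums_cong_iff_adj_sum)
  then show ?thesis
    unfolding assms(2) sums_cong_iff_adj_sum by auto
qed

lemma image_Suc_mod_lessThan: "(\<lambda>i. (i + 1) mod n) ` {..<n} = {..<n}"
  for n :: nat
proof
  show "{..<n} \<subseteq> (\<lambda>i. (i + 1) mod n) ` {..<n}"
  proof
    fix j assume "j \<in> {..<n}"
    then show "j \<in> (\<lambda>i. (i + 1) mod n) ` {..<n}"
      by (cases j) (auto intro: image_eqI[where x = "n - 1"] image_eqI[where x = "j - 1"])
  qed
qed auto

lemma sums_cong_rotate1: "sums_cong k (rotate1 xs) \<longleftrightarrow> sums_cong k xs"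
proof (rule sums_cong_transfer[where f = "\<lambda>i. (i + 1) mod length xs" and c = 0 and s = 1])
  fix i assume i: "i < length xs"
  then have "(i + 1) mod length xs < length xs" by (intro mod_less_divisor) linarith
  then show "[adj_sum (rotate1 xs) i = 0 + 1 * adj_sum xs ((i + 1) mod length xs)] (mod k)"
    using i by (simp add: adj_sum_def nth_rotate1)
qed (simp_all add: image_Suc_mod_lessThan[simplified])

lemma cong_mod_of_dvd: "k dvd p \<Longrightarrow> [x mod p = x] (mod k)"
  for k p x :: int
  by (simp add: cong_def mod_mod_cancel)

lemma length_op2 [simp]: "length (op2 p a xs) = length xs"
  by (simp add: op2_def)

lemma length_op3 [simp]: "length (op3 p a xs) = length xs"
  by (simp add: op3_def)

lemma length_op4 [simp]: "length (op4 p xs) = length xs"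
  by (simp add: op4_def)

lemma op2_nth_cong:
  assumes "k dvd p" and "i < length xs"
  shows "[op2 p a xs ! i = xs ! i + (-1) ^ (i + 1) * (xs ! 0 - a)] (mod k)"
  using assms cong_mod_of_dvd[OF assms(1)] by (cases "i = 0") (simp_all add: op2_def)

lemma op3_nth_cong:
  assumes "k dvd p" and "i < length xs"
  shows "[op3 p a xs ! i = xs ! 0 - xs ! i + a] (mod k)"
  using assms cong_mod_of_dvd[OF assms(1)] by (cases "i = 0") (simp_all add: op3_def)

lemma alternating_sign_cancel:
  assumes "even n" and "i < n"
  shows "(-1::int) ^ (i + 1) + (-1) ^ ((i + 1) mod n + 1) = 0"
proof (cases "i + 1 < n")
  case False
  then have "i + 1 = n" using assms(2) by simp
  then show ?thesis using assms(1) by simp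
qed simp

lemma sums_cong_op2:
  assumes "k dvd p" and "even (length xs)"
  shows "sums_cong k (op2 p a xs) \<longleftrightarrow> sums_cong k xs"
proof (rule sums_cong_transfer[where f = id and c = 0 and s = 1])
  fix i assume i: "i < length xs"
  let ?j = "(i + 1) mod length xs" and ?d = "xs ! 0 - a"
  have "?j < length xs" using i by (intro mod_less_divisor) linarith
  then have "[adj_sum (op2 p a xs) i =
      xs ! i + (-1) ^ (i + 1) * ?d + (xs ! ?j + (-1) ^ (?j + 1) * ?d)] (mod k)"
    unfolding adj_sum_def length_op2 using i assms(1) by (intro cong_add op2_nth_cong)
  also have "xs ! i + (-1) ^ (i + 1) * ?d + (xs ! ?j + (-1) ^ (?j + 1) * ?d)
      = adj_sum xs i + ((-1) ^ (i + 1) + (-1) ^ (?j + 1)) * ?d"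
    by (simp add: adj_sum_def algebra_simps)
  finally show "[adj_sum (op2 p a xs) i = 0 + 1 * adj_sum xs (id i)] (mod k)"
    using alternating_sign_cancel[OF assms(2) i] by simp
qed simp_all

lemma sums_cong_op3:
  assumes "k dvd p"
  shows "sums_cong k (op3 p a xs) \<longleftrightarrow> sums_cong k xs"
proof (rule sums_cong_transfer[where f = id and c = "2 * (xs ! 0 + a)" and s = "-1"])
  fix i assume i: "i < length xs"
  let ?j = "(i + 1) mod length xs"
  have "?j < length xs" using i by (intro mod_less_divisor) linarith
  then have "[adj_sum (op3 p a xs) i = xs ! 0 - xs ! i + a + (xs ! 0 - xs ! ?j + a)] (mod k)"
    unfolding adj_sum_def length_op3 using i assms by (intro cong_add op3_nth_cong)
  then show "[adj_sum (op3 p a xs) i = 2 * (xs ! 0 + a) + - 1 * adj_sum xs (id i)] (mod k)"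
    by (simp add: adj_sum_def algebra_simps)
qed simp_all

lemma op4_adj_sum:
  assumes "k dvd p" and "3 < length xs"
  shows "[adj_sum (op4 p xs) 0 = adj_sum xs 1] (mod k)"
    and "[adj_sum (op4 p xs) 1 = 2 * adj_sum xs 1 - adj_sum xs 0] (mod k)"
    and "\<And>i. 2 \<le> i \<Longrightarrow> i < length xs \<Longrightarrow> adj_sum (op4 p xs) i = adj_sum xs i"
proof -
  have new: "[op4 p xs ! 1 = - xs ! 0 + xs ! 1 + xs ! 2] (mod k)"
    using assms by (simp add: op4_def cong_mod_of_dvd)
  have "[xs ! 0 + op4 p xs ! 1 = xs ! 0 + (- xs ! 0 + xs ! 1 + xs ! 2)] (mod k)"
    by (intro cong_add cong_refl new)
  then show "[adj_sum (op4 p xs) 0 = adj_sum xs 1] (mod k)"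
    using assms(2) by (simp add: adj_sum_def op4_def numeral_2_eq_2)
  have "[op4 p xs ! 1 + xs ! 2 = - xs ! 0 + xs ! 1 + xs ! 2 + xs ! 2] (mod k)"
    by (intro cong_add cong_refl new)
  then show "[adj_sum (op4 p xs) 1 = 2 * adj_sum xs 1 - adj_sum xs 0] (mod k)"
    using assms(2) by (simp add: adj_sum_def op4_def numeral_2_eq_2 algebra_simps)
  fix i assume "2 \<le> i" "i < length xs"
  moreover have "(i + 1) mod length xs \<noteq> 1"
    using calculation by (cases "i + 1 = length xs") auto
  ultimately show "adj_sum (op4 p xs) i = adj_sum xs i"
    by (simp add: adj_sum_def op4_def)
qed

lemma sums_cong_op4:
  assumes "k dvd p" and "3 < length xs"
  shows "sums_cong k (op4 p xs) \<longleftrightarrow> sums_cong k xs"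
proof -
  note new_sums = op4_adj_sum[OF assms]
  have nonempty: "xs \<noteq> []" "op4 p xs \<noteq> []"
    using assms(2) by (simp_all flip: length_greater_0_conv)
  have combine: "[2 * x - y = c] (mod k)" if "[x = c] (mod k)" "[y = c] (mod k)" for x y c :: int
    using cong_diff[OF cong_scalar_left[OF that(1), of 2] that(2)] by simp
  have positions: "0 < length xs" "1 < length xs"
    using assms(2) by auto
  have "\<forall>i<length xs. [adj_sum (op4 p xs) i = c] (mod k)"
    if old: "\<forall>i<length xs. [adj_sum xs i = c] (mod k)" for c
  proof -
    have "[adj_sum (op4 p xs) 0 = c] (mod k)"
      using cong_trans[OF new_sums(1) old[rule_format, OF positions(2)]] .
    moreover have "[adj_sum (op4 p xs) 1 = c] (mod k)"
      using cong_trans[OF new_sums(2) combine[OF old[rule_format, OF positions(2)]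
          old[rule_format, OF positions(1)]]] .
    ultimately show ?thesis
      using old new_sums(3) by (metis One_nat_def less_2_cases not_le_imp_less)
  qed
  moreover have "\<forall>i<length xs. [adj_sum xs i = c] (mod k)"
    if new: "\<forall>i<length xs. [adj_sum (op4 p xs) i = c] (mod k)" for c
  proof -
    have second: "[adj_sum xs 1 = c] (mod k)"
      using cong_trans[OF cong_sym[OF new_sums(1)] new[rule_format, OF positions(1)]] .
    have "[2 * adj_sum xs 1 - adj_sum xs 0 = c] (mod k)"
      using cong_trans[OF cong_sym[OF new_sums(2)] new[rule_format, OF positions(2)]] .
    then have "[adj_sum xs 0 = c] (mod k)"
      using combine[OF second] by fastforce
    then show ?thesis
      using second new new_sums(3) by (metis One_nat_def less_2_cases not_le_imp_less)
  qed
  ultimately show ?thesis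
    unfolding sums_cong_iff_common_residue[OF nonempty(1)]
      sums_cong_iff_common_residue[OF nonempty(2)] length_op4 by blast
qed

lemma length_step: "step p u v \<Longrightarrow> length v = length u \<or> u = [] \<and> length v = 1"
proof (induction rule: step.induct)
  case (s1 xs)
  then show ?case by (cases xs) (simp_all add: op1_def)
qed simp_all

lemma sums_cong_step:
  assumes "step p u v" and "k dvd p" and "even (length u)"
  shows "sums_cong k v \<longleftrightarrow> sums_cong k u"
  using assms
proof (induction rule: step.induct)
  case (s1 xs)
  show ?case
  proof (cases "xs = []")
    case True
    then show ?thesis by (simp add: op1_def sums_cong_def)
  next
    case False
    then show ?thesis by (simp add: op1_def rotate1_hd_tl[symmetric] sums_cong_rotate1)
  qed
qed (simp_all add: sums_cong_op2 sums_cong_op3 sums_cong_op4)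

lemma equiv_Up_invariants:
  assumes "equiv_Up p a b" and "k dvd p" and "a \<noteq> []" and "even (length a)"
  shows "length b = length a \<and> (sums_cong k b \<longleftrightarrow> sums_cong k a)"
  using assms(1) unfolding equiv_Up_def
proof (induction rule: rtranclp_induct)
  case (step y z)
  then have y: "length y = length a" "sums_cong k y \<longleftrightarrow> sums_cong k a"
    by simp_all
  then have "y \<noteq> []" "even (length y)"
    using assms(3,4) by auto
  from step.hyps(2) show ?case
  proof
    assume forward: "step p y z"
    then have "length z = length y"
      using length_step \<open>y \<noteq> []\<close> by blast
    then show ?thesis
      using sums_cong_step[OF forward assms(2)] y \<open>even (length y)\<close> by simp
  next
    assume backward: "step p z y"
    then have "length z = length y"
      using length_step \<open>even (length y)\<close> by fastforce
    then show ?thesis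
      using sums_cong_step[OF backward assms(2)] y \<open>even (length y)\<close> by simp
  qed
qed simp

theorem mainTheorem1:
  fixes p :: int and a b :: "int list"
  assumes "p \<ge> 2"
    and "a \<in> U p" and "b \<in> U p"
    and "equiv_Up p a b"
  shows "tau p a = tau p b"
proof -
  have "a \<noteq> []" "even (length a)"
    using assms(2) by (simp_all add: U_def)
  then have "sums_cong k a \<longleftrightarrow> sums_cong k b" if "k dvd p" for k
    using equiv_Up_invariants[OF assms(4) that] by simp
  then have "{k. 1 \<le> k \<and> k \<le> p \<and> k dvd p \<and> sums_cong k a}
      = {k. 1 \<le> k \<and> k \<le> p \<and> k dvd p \<and> sums_cong k b}"
    by blast
  then show ?thesis
    by (simp add: tau_def)
qed

end
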